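(* Let $\alpha \in [0,1)$, let $T$ be any monotone total order on $\Omega$, let $\mathbf{x} \in \Omega$, and let $k \in \{0,\dots,m-2\}$ be such that $\mathbf{S}_k \le_T \mathbf{x} \le_T \mathbf{S}_{k+1}$, where $\mathbf{S}_j = (S_j,\dots,S_j)$ denotes a homogeneous sample. Then $$B_{T_h}^*(\mathbf{S}_k) \le B_T^*(\mathbf{x}) \le B_{T_\ell}^*(\mathbf{S}_{k+1}).$$
   Context: Fix integers $m \ge 2$, $n \ge 1$ and reals $S_{\min} < S_{\max}$; $S = \{S_0,\dots,S_{m-1}\}$ with $S_k = S_{\min} + k\frac{S_{\max}-S_{\min}}{m-1}$. $\mathcal{F}$ is the set of probability distributions on $S$, identified with the probability simplex in $\mathbb{R}^m$ with the Euclidean topology; $E[F]$ is the mean. $\Omega$ is the set of samples of size $n$ from $S$, identified with their sorted versions $x_{(1)} \le \dots \le x_{(n)}$. $P_F[\Omega']$ is the probability that the sorted sample of $n$ i.i.d. draws from $F$ lies in $\Omega' \subseteq \Omega$; $\mathcal{G}(\Omega',\alpha) = \{F : P_F[\Omega'] > \alpha\}$ and $\mathcal{F}(\Omega',\alpha)$ is its closure. For a total order $T$ on $\Omega$, $\Omega(\mathbf{x},T) = \{\mathbf{y} : \mathbf{x} \le_T \mathbf{y}\}$ and the pessimal (conditionally optimal) bound is $B_T^*(\mathbf{x}) = \min\{E[F] : F \in \mathcal{F}(\Omega(\mathbf{x},T),\alpha)\}$ (standing assumption: the sets involved are nonempty). $\mathbf{x} \le \mathbf{y}$ means $x_{(j)}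 \le y_{(j)}$ for all $j$; $T$ is monotone if $\mathbf{x} \le \mathbf{y}$ implies $\mathbf{x} \le_T \mathbf{y}$. $T_\ell$ (low lexicographic): $\mathbf{x} \le_{T_\ell} \mathbf{y}$ iff $\mathbf{x}=\mathbf{y}$ or at the smallest index $j$ with $x_{(j)} \ne y_{(j)}$ we have $x_{(j)} < y_{(j)}$. $T_h$ (high lexicographic): same with the largest such index. *)

theory Defs
  imports "HOL-Analysis.Analysis"
begin

definition Spt :: "nat \<Rightarrow> real \<Rightarrow> real \<Rightarrow> nat \<Rightarrow> real" where
  "Spt m Smin Smax k = Smin + real k * (Smax - Smin) / (real m - 1)"

definition Dists :: "nat \<Rightarrow> (nat \<Rightarrow> real) set" where
  "Dists m = {F. (\<forall>k<m. 0 \<le> F k) \<and> (\<forall>k\<ge>m. F k = 0) \<and> (\<Sum>k<m. F k) = 1}"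

definition mean :: "nat \<Rightarrow> real \<Rightarrow> real \<Rightarrow> (nat \<Rightarrow> real) \<Rightarrow> real" where
  "mean m Smin Smax F = (\<Sum>k<m. F k * Spt m Smin Smax k)"

definition Omega :: "nat \<Rightarrow> nat \<Rightarrow> real \<Rightarrow> real \<Rightarrow> real list set" where
  "Omega m n Smin Smax = {xs. length xs = n \<and> sorted xs \<and> set xs \<subseteq> Spt m Smin Smax ` {..<m}}"

text \<open>P_F[Omega']: probability that the sorted sample of n iid draws from F lies in Omega'.
  Sum over all ordered index sequences of length n.\<close>
definition prob_sample :: "nat \<Rightarrow> nat \<Rightarrow> real \<Rightarrow> real \<Rightarrow> (nat \<Rightarrow> real) \<Rightarrow> real list set \<Rightarrow> real" where
  "prob_sample m n Smin Smax F A =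
     (\<Sum>is \<in> {is. length is = n \<and> set is \<subseteq> {..<m}}.
        (\<Prod>i\<leftarrow>is. F i) * (if sort (map (Spt m Smin Smax) is) \<in> A then 1 else 0))"

definition Gset :: "nat \<Rightarrow> nat \<Rightarrow> real \<Rightarrow> real \<Rightarrow> real list set \<Rightarrow> real \<Rightarrow> (nat \<Rightarrow> real) set" where
  "Gset m n Smin Smax A \<alpha> = {F \<in> Dists m. prob_sample m n Smin Smax F A > \<alpha>}"

text \<open>F(Omega', alpha): closure of G in the Euclidean topology of R^m (the simplex is closed,
  so closure within the simplex equals closure in R^m).\<close>
definition Fset :: "nat \<Rightarrow> nat \<Rightarrow> real \<Rightarrow> real \<Rightarrow> real list set \<Rightarrow> real \<Rightarrow> (nat \<Rightarrow> real) set" where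
  "Fset m n Smin Smax A \<alpha> = {F \<in> Dists m. \<forall>e>0. \<exists>G \<in> Gset m n Smin Smax A \<alpha>.
       sqrt (\<Sum>k<m. (F k - G k)^2) < e}"

definition upset :: "real list set \<Rightarrow> (real list \<times> real list) set \<Rightarrow> real list \<Rightarrow> real list set" where
  "upset Om T x = {y \<in> Om. (x, y) \<in> T}"

definition Bstar :: "nat \<Rightarrow> nat \<Rightarrow> real \<Rightarrow> real \<Rightarrow> real \<Rightarrow> (real list \<times> real list) set \<Rightarrow> real list \<Rightarrow> real" where
  "Bstar m n Smin Smax \<alpha> T x =
     Inf (mean m Smin Smax ` Fset m n Smin Smax (upset (Omega m n Smin Smax) T x) \<alpha>)"

definition sample_le :: "real list \<Rightarrow> real list \<Rightarrow> bool" where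
  "sample_le xs ys \<longleftrightarrow> length xs = length ys \<and> (\<forall>j<length xs. xs ! j \<le> ys ! j)"

definition monotone_order :: "real list set \<Rightarrow> (real list \<times> real list) set \<Rightarrow> bool" where
  "monotone_order Om T \<longleftrightarrow> (\<forall>x\<in>Om. \<forall>y\<in>Om. sample_le x y \<longrightarrow> (x, y) \<in> T)"

definition Tlow :: "real list set \<Rightarrow> (real list \<times> real list) set" where
  "Tlow Om = {(x, y). x \<in> Om \<and> y \<in> Om \<and> (x = y \<or>
      (\<exists>j<length x. (\<forall>i<j. x ! i = y ! i) \<and> x ! j < y ! j))}"

definition Thigh :: "real list set \<Rightarrow> (real list \<times> real list) set" where
  "Thigh Om = {(x, y). x \<in> Om \<and> y \<in> Om \<and> (x = y \<or>
      (\<exists>j<length x. (\<forall>i. j < i \<and> i < length x \<longrightarrow> x ! i = y ! i) \<and> x ! j < y ! j))}"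

definition homog :: "nat \<Rightarrow> nat \<Rightarrow> real \<Rightarrow> real \<Rightarrow> nat \<Rightarrow> real list" where
  "homog m n Smin Smax k = replicate n (Spt m Smin Smax k)"

end

theory Submission
  imports Defs
begin

text \<open>
  For a monotone order \<open>T\<close>, every sample above \<open>S\<^sub>k\<^sub>+\<^sub>1\<close> in the low lexicographic order
  dominates \<open>S\<^sub>k\<^sub>+\<^sub>1\<close> componentwise, hence lies above \<open>x\<close> in \<open>T\<close>; and every sample above
  \<open>x\<close> in \<open>T\<close> lies above \<open>S\<^sub>k\<close> in \<open>T\<close>, so it cannot be componentwise below \<open>S\<^sub>k\<close> unless it
  equals it, hence its largest entry exceeds \<open>S\<^sub>k\<close>, which puts it above \<open>S\<^sub>k\<close> in the high
  lexicographic order. Thus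
  \<open>\<Omega>(S\<^sub>k\<^sub>+\<^sub>1, T\<^sub>\<ell>) \<subseteq> \<Omega>(x, T) \<subseteq> \<Omega>(S\<^sub>k, T\<^sub>h)\<close>.
  Enlarging \<open>\<Omega>'\<close> enlarges \<open>P\<^sub>F[\<Omega>']\<close>, hence \<open>\<F>(\<Omega>', \<alpha>)\<close>, hence lowers the infimum of the means;
  the infima are finite because the point mass at \<open>S\<^sub>k\<^sub>+\<^sub>1\<close> lies in
  \<open>\<F>(\<Omega>(S\<^sub>k\<^sub>+\<^sub>1, T\<^sub>\<ell>), \<alpha>)\<close> and all means are at least \<open>S\<^sub>m\<^sub>i\<^sub>n\<close>.
\<close>

lemma Tlow_replicate_imp_sample_le:
  assumes "(replicate n c, y) \<in> Tlow Om" "sorted y" "length y = n"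
  shows "sample_le (replicate n c) y"
proof (cases "y = replicate n c")
  case False
  then obtain j where j: "j < n" "\<forall>i<j. c = y ! i" "c < y ! j"
    using assms(1) unfolding Tlow_def by auto
  have "c \<le> y ! 0"
    using j by (cases "j = 0") auto
  moreover have "y ! 0 \<le> y ! i" if "i < n" for i
    using sorted_nth_mono[OF assms(2), of 0 i] that assms(3) by simp
  ultimately show ?thesis
    using assms(3) unfolding sample_le_def by (auto intro: order_trans)
qed (simp add: sample_le_def)

lemma replicate_Thigh_or_sample_le:
  assumes "replicate n c \<in> Om" "y \<in> Om" "sorted y" "length y = n" "0 < n"
  shows "(replicate n c, y) \<in> Thigh Om \<or> sample_le y (replicate n c)"
proof (cases "c < y ! (n - 1)")
  case True
  then have "(replicate n c, y) \<in> Thigh Om"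
    using assms unfolding Thigh_def by (auto intro!: exI[of _ "n - 1"])
  then show ?thesis ..
next
  case False
  have "y ! i \<le> c" if "i < n" for i
    using sorted_nth_mono[OF assms(3), of i "n - 1"] that assms(4) False by linarith
  then have "sample_le y (replicate n c)"
    using assms(4) unfolding sample_le_def by simp
  then show ?thesis ..
qed

lemma upset_Tlow_replicate_subset:
  assumes "trans T" "monotone_order Om T" "\<forall>y\<in>Om. sorted y \<and> length y = n"
    and "replicate n c \<in> Om" "(x, replicate n c) \<in> T"
  shows "upset Om (Tlow Om) (replicate n c) \<subseteq> upset Om T x"
proof
  fix y assume "y \<in> upset Om (Tlow Om) (replicate n c)"
  then have y: "y \<in> Om" "(replicate n c, y) \<in> Tlow Om"
    unfolding upset_def by auto
  then have "sample_le (replicate n c) y"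
    using assms(3) Tlow_replicate_imp_sample_le by blast
  then have "(replicate n c, y) \<in> T"
    using assms(2,4) y(1) unfolding monotone_order_def by blast
  then show "y \<in> upset Om T x"
    using assms(1,5) y(1) unfolding upset_def by (blast dest: transD)
qed

lemma upset_subset_Thigh_replicate:
  assumes "trans T" "antisym T" "monotone_order Om T" "\<forall>y\<in>Om. sorted y \<and> length y = n"
    and "0 < n" "replicate n c \<in> Om" "(replicate n c, x) \<in> T"
  shows "upset Om T x \<subseteq> upset Om (Thigh Om) (replicate n c)"
proof
  fix y assume "y \<in> upset Om T x"
  then have y: "y \<in> Om" "(x, y) \<in> T"
    unfolding upset_def by auto
  have above: "(replicate n c, y) \<in> T"
    using assms(1,7) y(2) by (blast dest: transD)
  have "(replicate n c, y) \<in> Thigh Om"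
  proof (cases "sample_le y (replicate n c)")
    case True
    then have "(y, replicate n c) \<in> T"
      using assms(3,6) y(1) unfolding monotone_order_def by blast
    then have "y = replicate n c"
      using above assms(2) by (blast dest: antisymD)
    then show ?thesis
      using assms(6) unfolding Thigh_def by simp
  next
    case False
    then show ?thesis
      using replicate_Thigh_or_sample_le[OF assms(6) y(1) _ _ assms(5)] assms(4) y(1) by blast
  qed
  then show "y \<in> upset Om (Thigh Om) (replicate n c)"
    using y(1) unfolding upset_def by simp
qed

lemma prob_sample_mono:
  assumes "F \<in> Dists m" "A \<subseteq> B"
  shows "prob_sample m n Smin Smax F A \<le> prob_sample m n Smin Smax F B"
  unfolding prob_sample_def
proof (rule sum_mono)
  fix xs assume "xs \<in> {is. length is = n \<and> set is \<subseteq> {..<m}}"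
  then have "\<forall>i\<in>set xs. 0 \<le> F i"
    using assms(1) unfolding Dists_def by auto
  then have "0 \<le> (\<Prod>i\<leftarrow>xs. F i)"
    by (intro prod_list_nonneg) auto
  then show "(\<Prod>i\<leftarrow>xs. F i) * (if sort (map (Spt m Smin Smax) xs) \<in> A then 1 else 0)
      \<le> (\<Prod>i\<leftarrow>xs. F i) * (if sort (map (Spt m Smin Smax) xs) \<in> B then 1 else 0)"
    using assms(2) by auto
qed

lemma Fset_mono:
  assumes "A \<subseteq> B"
  shows "Fset m n Smin Smax A \<alpha> \<subseteq> Fset m n Smin Smax B \<alpha>"
proof -
  have "Gset m n Smin Smax A \<alpha> \<subseteq> Gset m n Smin Smax B \<alpha>"
    unfolding Gset_def using prob_sample_mono[OF _ assms] by (auto intro: less_le_trans)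
  then show ?thesis
    unfolding Fset_def by blast
qed

lemma prob_sample_point_mass:
  assumes "j < m"
  shows "prob_sample m n Smin Smax (\<lambda>i. if i = j then 1 else 0) A
    = (if homog m n Smin Smax j \<in> A then 1 else 0)"
proof -
  define F :: "nat \<Rightarrow> real" where "F = (\<lambda>i. if i = j then 1 else 0)"
  define L where "L = {is. length is = n \<and> set is \<subseteq> {..<m}}"
  define w where "w xs = (\<Prod>i\<leftarrow>xs. F i) * (if sort (map (Spt m Smin Smax) xs) \<in> A then 1 else 0)"
    for xs
  have "finite L"
    using finite_lists_length_eq[of "{..<m}" n] unfolding L_def by (simp add: conj_commute)
  moreover have "replicate n j \<in> L"
    using assms unfolding L_def by auto
  moreover have "w xs = 0" if "xs \<in> L - {replicate n j}" for xs
  proof -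
    from that have "\<exists>i\<in>set xs. i \<noteq> j"
      unfolding L_def by (auto intro: replicate_eqI)
    then have "0 \<in> set (map F xs)"
      unfolding F_def by force
    then show ?thesis
      unfolding w_def by (simp add: prod_list_zero_iff)
  qed
  ultimately have "sum w L = w (replicate n j)"
    by (subst sum.remove) (auto intro: sum.neutral)
  then show ?thesis
    unfolding prob_sample_def F_def[symmetric] L_def[symmetric] w_def homog_def
    by (simp add: F_def prod_list_replicate)
qed

lemma point_mass_in_Fset:
  assumes "j < m" "homog m n Smin Smax j \<in> A" "\<alpha> < 1"
  shows "(\<lambda>i. if i = j then 1 else 0) \<in> Fset m n Smin Smax A \<alpha>"
proof -
  have "(\<lambda>i. if i = j then 1 else 0 :: real) \<in> Dists m"
    using assms(1) unfolding Dists_def by (auto simp: sum.delta)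
  then have "(\<lambda>i. if i = j then 1 else 0) \<in> Gset m n Smin Smax A \<alpha>"
    using assms unfolding Gset_def by (simp add: prob_sample_point_mass)
  then show ?thesis
    unfolding Fset_def Gset_def by (auto intro!: bexI)
qed

lemma Spt_ge_Smin:
  assumes "k < m" "Smin \<le> Smax"
  shows "Smin \<le> Spt m Smin Smax k"
  using assms unfolding Spt_def by (auto intro!: divide_nonneg_nonneg)

lemma mean_ge_Smin:
  assumes "F \<in> Dists m" "Smin \<le> Smax"
  shows "Smin \<le> mean m Smin Smax F"
proof -
  have "Smin = (\<Sum>k<m. F k * Smin)"
    using assms(1) unfolding Dists_def by (simp add: sum_distrib_right[symmetric])
  also have "\<dots> \<le> (\<Sum>k<m. F k * Spt m Smin Smax k)"
    using assms Spt_ge_Smin unfolding Dists_def by (auto intro!: sum_mono mult_left_mono)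
  finally show ?thesis
    unfolding mean_def .
qed

lemma Inf_mean_Fset_antimono:
  assumes "A \<subseteq> B" "Fset m n Smin Smax A \<alpha> \<noteq> {}" "Smin \<le> Smax"
  shows "Inf (mean m Smin Smax ` Fset m n Smin Smax B \<alpha>)
    \<le> Inf (mean m Smin Smax ` Fset m n Smin Smax A \<alpha>)"
proof (rule cInf_superset_mono)
  show "bdd_below (mean m Smin Smax ` Fset m n Smin Smax B \<alpha>)"
    using mean_ge_Smin[OF _ assms(3)] unfolding Fset_def bdd_below_def by blast
qed (use assms Fset_mono in blast)+

theorem theorem4:
  fixes m n :: nat and Smin Smax \<alpha> :: real
    and T :: "(real list \<times> real list) set" and x :: "real list" and k :: nat
  assumes "2 \<le> m" and "1 \<le> n" and "Smin < Smax"
    and "0 \<le> \<alpha>" and "\<alpha> < 1"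
    and "T \<subseteq> Omega m n Smin Smax \<times> Omega m n Smin Smax"
    and "linear_order_on (Omega m n Smin Smax) T"
    and "monotone_order (Omega m n Smin Smax) T"
    and "x \<in> Omega m n Smin Smax"
    and "k \<le> m - 2"
    and "(homog m n Smin Smax k, x) \<in> T"
    and "(x, homog m n Smin Smax (k + 1)) \<in> T"
  shows "Bstar m n Smin Smax \<alpha> (Thigh (Omega m n Smin Smax)) (homog m n Smin Smax k)
           \<le> Bstar m n Smin Smax \<alpha> T x
       \<and> Bstar m n Smin Smax \<alpha> T x
           \<le> Bstar m n Smin Smax \<alpha> (Tlow (Omega m n Smin Smax)) (homog m n Smin Smax (k + 1))"
proof -
  let ?Om = "Omega m n Smin Smax" and ?a = "homog m n Smin Smax k"
    and ?b = "homog m n Smin Smax (k + 1)"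
  have order: "trans T" "antisym T"
    using assms(7) unfolding order_on_defs by auto
  have Om: "\<forall>y\<in>?Om. sorted y \<and> length y = n"
    unfolding Omega_def by auto
  have "k + 1 < m"
    using assms(1,10) by simp
  then have homog_in: "?a \<in> ?Om" "?b \<in> ?Om"
    unfolding Omega_def homog_def by auto
  have upper: "upset ?Om (Tlow ?Om) ?b \<subseteq> upset ?Om T x"
    using upset_Tlow_replicate_subset[OF order(1) assms(8) Om] homog_in assms(12)
    unfolding homog_def by blast
  have lower: "upset ?Om T x \<subseteq> upset ?Om (Thigh ?Om) ?a"
    using upset_subset_Thigh_replicate[OF order assms(8) Om] homog_in assms(2,11)
    unfolding homog_def by simp
  have "?b \<in> upset ?Om (Tlow ?Om) ?b"
    using homog_in unfolding upset_def Tlow_def by simp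
  then have nonempty: "Fset m n Smin Smax (upset ?Om (Tlow ?Om) ?b) \<alpha> \<noteq> {}"
    using point_mass_in_Fset[OF \<open>k + 1 < m\<close> _ assms(5)] by blast
  show ?thesis
    unfolding Bstar_def
    using Inf_mean_Fset_antimono[OF lower] Inf_mean_Fset_antimono[OF upper nonempty]
      nonempty Fset_mono[OF upper] assms(3) by fastforce
qed

end
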